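(* Let $V = V_1 \oplus V_2$ be a finite-dimensional complex vector space, $T = \mathrm{Sym}(V^* )$, $T_i = \mathrm{Sym}(V_i^* ) \subset T$. Let $d \ge 2$, $F_i \in S^d V_i$ for $i=1,2$, and $F = F_1 + F_2 \in S^d V$. Let $l_i \in V_i^*$ with $l_i \notin F_i^\perp$ (the perp ideal of $F_i$ in $T_i$) for $i = 1,2$. Then <ol> <li>$F^\perp + (l_1 + l_2) \subsetneq \big[F_1^\perp + (l_1) + (V_2^* )\big] \cap \big[F_2^\perp + (l_2) + (V_1^* )\big]$ as ideals of $T$;</li> <li>$\dim_{\mathbb{C}} T/(F^\perp + (l_1+l_2)) \ge \dim_{\mathbb{C}} T_1/(F_1^\perp + (l_1)) + \dim_{\mathbb{C}} T_2/(F_2^\perp + (l_2))$.</li> </ol>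
   Context: For a complex vector space $W$, $\mathrm{Sym}(W^* )$ acts on $\mathrm{Sym}(W)$ by differentiation. For $G \in S^d W$, the perp ideal is $G^\perp = \{ g \in \mathrm{Sym}(W^* ) : g \cdot G = 0 \}$. $F^\perp$ denotes the perp ideal of $F$ in $T$; $(V_j^* )$ denotes the ideal of $T$ generated by $V_j^*$, and ideals of $T_i$ are regarded in $T$ via $T_i \subset T$ (generating ideals there). *)

theory Defs
  imports Complex_Main "HOL-Library.Poly_Mapping" "HOL-Library.Extended_Nat"
begin

text \<open>Polynomials over \<complex> in the variables of type 'v (a basis of V, resp. the dual basis
of V^*): maps from exponent vectors (monomials) to coefficients.  The same type is used
for Sym(V^*) (operators) and for Sym(V) (forms being differentiated).\<close>

type_synonym 'v mpoly = "('v \<Rightarrow>\<^sub>0 nat) \<Rightarrow>\<^sub>0 complex"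

text \<open>Polynomials only involving the variables in X (the subring Sym(W^*) for W spanned by X).\<close>
definition Poly :: "'v set \<Rightarrow> 'v mpoly set" where
  "Poly X = {p :: 'v mpoly. \<forall>m\<in>Poly_Mapping.keys p. Poly_Mapping.keys m \<subseteq> X}"

definition total_deg :: "('v \<Rightarrow>\<^sub>0 nat) \<Rightarrow> nat" where
  "total_deg m = (\<Sum>v\<in>Poly_Mapping.keys m. Poly_Mapping.lookup m v)"

definition Hom :: "'v set \<Rightarrow> nat \<Rightarrow> 'v mpoly set" where
  "Hom X d = {p \<in> Poly X. \<forall>m\<in>Poly_Mapping.keys p. total_deg m = d}"

definition LinForms :: "'v set \<Rightarrow> 'v mpoly set" where
  "LinForms X = Hom X 1"

text \<open>Action of Sym(V^*) on Sym(V) by differentiation: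
  \<partial>^\<alpha> y^\<beta> = (\<Prod>_v \<beta>_v!/(\<beta>_v-\<alpha>_v)!) y^(\<beta>-\<alpha>) if \<alpha> \<le> \<beta>, and 0 otherwise;
  extended bilinearly.\<close>
definition act :: "'v mpoly \<Rightarrow> 'v mpoly \<Rightarrow> 'v mpoly" where
  "act g F = (\<Sum>\<alpha>\<in>Poly_Mapping.keys g. \<Sum>\<beta>\<in>Poly_Mapping.keys F.
     if (\<forall>v. Poly_Mapping.lookup \<alpha> v \<le> Poly_Mapping.lookup \<beta> v)
     then Poly_Mapping.single (\<beta> - \<alpha>)
            (Poly_Mapping.lookup g \<alpha> * Poly_Mapping.lookup F \<beta> *
             (\<Prod>v\<in>Poly_Mapping.keys \<beta>. of_nat (fact (Poly_Mapping.lookup \<beta> v)) / of_nat (fact (Poly_Mapping.lookup \<beta> v - Poly_Mapping.lookup \<alpha> v))))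
     else 0)"

definition perp :: "'v set \<Rightarrow> 'v mpoly \<Rightarrow> 'v mpoly set" where
  "perp X F = {g \<in> Poly X. act g F = 0}"

definition ideal_gen :: "'v set \<Rightarrow> 'v mpoly set \<Rightarrow> 'v mpoly set" where
  "ideal_gen X G = {p. \<exists>A f. finite A \<and> A \<subseteq> G \<and> (\<forall>a\<in>A. f a \<in> Poly X) \<and> p = (\<Sum>a\<in>A. f a * a)}"

text \<open>\<complex>-linear span (scalar multiplication = multiplication by a constant polynomial).\<close>
definition cspan :: "'v mpoly set \<Rightarrow> 'v mpoly set" where
  "cspan S = {p. \<exists>c. p = (\<Sum>s\<in>S. Poly_Mapping.single 0 (c s) * s)}"

text \<open>dim_\<complex> (R / I): least size of a finite subset of R spanning R modulo I
  (\<infinity> if there is none).\<close>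
definition spans_mod :: "'v mpoly set \<Rightarrow> 'v mpoly set \<Rightarrow> 'v mpoly set \<Rightarrow> bool" where
  "spans_mod R I S \<longleftrightarrow> finite S \<and> S \<subseteq> R \<and> R \<subseteq> {s + i | s i. s \<in> cspan S \<and> i \<in> I}"

definition quot_dim :: "'v mpoly set \<Rightarrow> 'v mpoly set \<Rightarrow> enat" where
  "quot_dim R I = (if \<exists>S. spans_mod R I S
     then enat (LEAST n. \<exists>S. spans_mod R I S \<and> card S = n) else \<infinity>)"

end

theory Submission
  imports Defs
begin

text \<open>
  Setting the variables of \<open>V\<^sub>2\<close> to zero is a ring homomorphism \<open>T \<rightarrow> T\<^sub>1\<close>, and it maps
  \<open>I = F\<^sup>\<perp> + (l\<^sub>1 + l\<^sub>2)\<close> into \<open>I\<^sub>1 = F\<^sub>1\<^sup>\<perp> + (l\<^sub>1)\<close>: for \<open>g \<in> F\<^sup>\<perp>\<close> the form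
  \<open>g F\<^sub>1 = - g F\<^sub>2\<close> lies in both \<open>Sym(V\<^sub>1)\<close> and \<open>Sym(V\<^sub>2)\<close>, so it is a constant \<open>c\<close>; as
  \<open>l\<^sub>1 F\<^sub>1 \<noteq> 0\<close> there is \<open>h \<in> T\<^sub>1\<close> with \<open>h l\<^sub>1 F\<^sub>1 = 1\<close>, whence the restriction of \<open>g\<close>
  minus \<open>c h l\<^sub>1\<close> lies in \<open>F\<^sub>1\<^sup>\<perp>\<close>. Since \<open>g\<close> minus its restriction lies in \<open>(V\<^sub>2\<^sup>*)\<close>, this
  gives the inclusion. It is strict: \<open>l\<^sub>1\<close> lies in both ideals on the right, but
  \<open>H = h\<^sub>1 F\<^sub>1 - h\<^sub>2 F\<^sub>2 = (h\<^sub>1 - h\<^sub>2) F\<close> is annihilated by \<open>I\<close> while \<open>l\<^sub>1 H = 1\<close>.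

  For the dimension bound, take a basis of \<open>T\<^sub>1/I\<^sub>1\<close> and a basis of \<open>T\<^sub>2/I\<^sub>2\<close> containing
  \<open>1\<close>. The first, the second without \<open>1\<close>, and \<open>l\<^sub>1\<close> are linearly independent modulo \<open>I\<close>:
  projecting a relation to \<open>T\<^sub>2\<close> and then to \<open>T\<^sub>1\<close> kills its coefficients one group at a time.
\<close>

abbreviation lookup :: "('a \<Rightarrow>\<^sub>0 'b::zero) \<Rightarrow> 'a \<Rightarrow> 'b"
  where "lookup \<equiv> Poly_Mapping.lookup"
abbreviation keys :: "('a \<Rightarrow>\<^sub>0 'b::zero) \<Rightarrow> 'a set"
  where "keys \<equiv> Poly_Mapping.keys"
abbreviation single :: "'a \<Rightarrow> 'b \<Rightarrow> 'a \<Rightarrow>\<^sub>0 'b::zero"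
  where "single \<equiv> Poly_Mapping.single"

lemma lookup_minus_nat: "lookup ((m::'v \<Rightarrow>\<^sub>0 nat) - n) v = lookup m v - lookup n v"
  by (simp add: minus_poly_mapping.rep_eq)

lemma sum_single_lookup: "(\<Sum>m\<in>keys p. single m (lookup p m)) = p"
proof (rule poly_mapping_eqI)
  fix k
  have "(\<Sum>m\<in>keys p. lookup (single m (lookup p m)) k) = lookup p k"
    by (cases "k \<in> keys p") (auto simp: lookup_single when_def in_keys_iff)
  then show "lookup (\<Sum>m\<in>keys p. single m (lookup p m)) k = lookup p k"
    by (simp add: lookup_sum)
qed

lemma mult_eq_sum_single:
  "p * q = (\<Sum>m\<in>keys p. \<Sum>n\<in>keys q. single (m + n) (lookup p m * lookup q n))"
proof -
  have "p * q = (\<Sum>m\<in>keys p. single m (lookup p m)) * (\<Sum>n\<in>keys q. single n (lookup q n))"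
    by (simp add: sum_single_lookup)
  also have "\<dots> = (\<Sum>m\<in>keys p. \<Sum>n\<in>keys q. single m (lookup p m) * single n (lookup q n))"
    by (simp add: sum_product)
  finally show ?thesis by (simp add: mult_single)
qed

definition smul :: "complex \<Rightarrow> 'v mpoly \<Rightarrow> 'v mpoly" where
  "smul c p = single 0 c * p"

lemma lookup_smul: "lookup (smul c p) k = c * lookup p k"
  by (simp add: smul_def flip: mult_map_scale_conv_mult) (simp add: map.rep_eq when_def)

lemma smul_single: "smul c (single k a) = single k (c * a)"
  by (simp add: smul_def mult_single)

lemma smul_sum: "smul c (\<Sum>i\<in>A. f i) = (\<Sum>i\<in>A. smul c (f i))"
  by (simp add: smul_def sum_distrib_left)

lemma vector_space_smul: "vector_space (smul :: complex \<Rightarrow> 'v mpoly \<Rightarrow> 'v mpoly)"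
  by unfold_locales
    (simp_all add: smul_def distrib_left single_add distrib_right mult_single flip: mult.assoc)

interpretation V: vector_space "smul :: complex \<Rightarrow> 'v mpoly \<Rightarrow> 'v mpoly"
  by (rule vector_space_smul)

section \<open>Polynomials in a subset of the variables\<close>

lemma Poly_iff: "p \<in> Poly X \<longleftrightarrow> (\<forall>m\<in>keys p. keys m \<subseteq> X)"
  by (simp add: Poly_def)

lemma Poly_UNIV [simp]: "p \<in> Poly UNIV"
  by (simp add: Poly_iff)

lemma Poly_mono: "X \<subseteq> X' \<Longrightarrow> Poly X \<subseteq> Poly X'"
  unfolding Poly_def by blast

definition restrict_vars :: "'v set \<Rightarrow> 'v mpoly \<Rightarrow> 'v mpoly" where
  "restrict_vars X p = (\<Sum>m\<in>{m\<in>keys p. keys m \<subseteq> X}. single m (lookup p m))"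

lemma lookup_restrict_vars:
  "lookup (restrict_vars X p) k = (if keys k \<subseteq> X then lookup p k else 0)"
proof -
  have "(\<Sum>m\<in>{m\<in>keys p. keys m \<subseteq> X}. lookup (single m (lookup p m)) k)
      = (if keys k \<subseteq> X then lookup p k else 0)"
    by (cases "k \<in> keys p") (auto simp: lookup_single when_def in_keys_iff)
  then show ?thesis by (simp add: restrict_vars_def lookup_sum)
qed

lemma restrict_vars_zero [simp]: "restrict_vars X 0 = 0"
  by (rule poly_mapping_eqI) (simp add: lookup_restrict_vars)

lemma restrict_vars_add: "restrict_vars X (p + q) = restrict_vars X p + restrict_vars X q"
  by (rule poly_mapping_eqI) (simp add: lookup_restrict_vars lookup_add)

lemma restrict_vars_diff: "restrict_vars X (p - q) = restrict_vars X p - restrict_vars X q"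
  by (rule poly_mapping_eqI) (simp add: lookup_restrict_vars lookup_minus)

lemma restrict_vars_sum: "restrict_vars X (\<Sum>i\<in>A. f i) = (\<Sum>i\<in>A. restrict_vars X (f i))"
  by (induction A rule: infinite_finite_induct) (auto simp: restrict_vars_add)

lemma restrict_vars_smul: "restrict_vars X (smul c p) = smul c (restrict_vars X p)"
  by (rule poly_mapping_eqI) (simp add: lookup_restrict_vars lookup_smul)

lemma restrict_vars_single:
  "restrict_vars X (single k c) = (if keys k \<subseteq> X then single k c else 0)"
  by (rule poly_mapping_eqI) (simp add: lookup_restrict_vars lookup_single when_def)

lemma restrict_vars_mult: "restrict_vars X (p * q) = restrict_vars X p * restrict_vars X q"
proof -
  have keys_add: "keys (m + n) = keys m \<union> keys n" for m n :: "'a \<Rightarrow>\<^sub>0 nat"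
    by (auto simp: in_keys_iff lookup_add)
  have "restrict_vars X (p * q)
      = (\<Sum>m\<in>keys p. \<Sum>n\<in>keys q. restrict_vars X (single (m + n) (lookup p m * lookup q n)))"
    by (simp add: mult_eq_sum_single[of p q] restrict_vars_sum)
  also have "\<dots> = (\<Sum>m\<in>keys p. \<Sum>n\<in>keys q.
      restrict_vars X (single m (lookup p m)) * restrict_vars X (single n (lookup q n)))"
    by (intro sum.cong refl) (simp add: restrict_vars_single keys_add mult_single)
  also have "\<dots> = restrict_vars X (\<Sum>m\<in>keys p. single m (lookup p m))
      * restrict_vars X (\<Sum>n\<in>keys q. single n (lookup q n))"
    by (simp add: restrict_vars_sum sum_product)
  finally show ?thesis by (simp only: sum_single_lookup)
qed

lemma restrict_vars_in_Poly: "restrict_vars X p \<in> Poly X"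
  unfolding Poly_iff
proof
  fix m assume "m \<in> keys (restrict_vars X p)"
  then have "lookup (restrict_vars X p) m \<noteq> 0" by (simp add: in_keys_iff)
  then show "keys m \<subseteq> X" by (simp add: lookup_restrict_vars split: if_splits)
qed

lemma Poly_iff_restrict_vars: "p \<in> Poly X \<longleftrightarrow> restrict_vars X p = p"
proof
  assume "p \<in> Poly X"
  then show "restrict_vars X p = p"
    by (intro poly_mapping_eqI) (auto simp: lookup_restrict_vars Poly_iff in_keys_iff)
qed (metis restrict_vars_in_Poly)

lemma restrict_vars_Poly: "p \<in> Poly X \<Longrightarrow> restrict_vars X p = p"
  by (simp add: Poly_iff_restrict_vars)

lemma Poly_add: "p \<in> Poly X \<Longrightarrow> q \<in> Poly X \<Longrightarrow> p + q \<in> Poly X"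
  by (simp add: Poly_iff_restrict_vars restrict_vars_add)

lemma Poly_diff: "p \<in> Poly X \<Longrightarrow> q \<in> Poly X \<Longrightarrow> p - q \<in> Poly X"
  by (simp add: Poly_iff_restrict_vars restrict_vars_diff)

lemma Poly_mult: "p \<in> Poly X \<Longrightarrow> q \<in> Poly X \<Longrightarrow> p * q \<in> Poly X"
  by (simp add: Poly_iff_restrict_vars restrict_vars_mult)

lemma Poly_single: "keys m \<subseteq> X \<Longrightarrow> single m c \<in> Poly X"
  by (simp add: Poly_iff_restrict_vars restrict_vars_single)

lemma Poly_const: "single 0 c \<in> Poly X"
  by (simp add: Poly_single)

lemma Poly_one: "1 \<in> Poly X"
  using Poly_const[of 1] by simp

lemma Poly_zero: "0 \<in> Poly X"
  using Poly_const[of 0] by simp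

lemma Poly_uminus: "p \<in> Poly X \<Longrightarrow> - p \<in> Poly X"
  using Poly_diff[OF Poly_zero] by simp

lemma Poly_smul: "p \<in> Poly X \<Longrightarrow> smul c p \<in> Poly X"
  by (simp add: smul_def Poly_mult Poly_const)

lemma Poly_sum: "(\<And>i. i \<in> A \<Longrightarrow> f i \<in> Poly X) \<Longrightarrow> (\<Sum>i\<in>A. f i) \<in> Poly X"
  by (induction A rule: infinite_finite_induct) (auto simp: Poly_add Poly_zero)

lemma restrict_vars_Poly_disjoint:
  assumes "X \<inter> Y = {}" "p \<in> Poly Y"
  shows "restrict_vars X p = single 0 (lookup p 0)"
proof (rule poly_mapping_eqI)
  fix m
  have "keys m \<subseteq> X \<longleftrightarrow> m = 0" if "m \<in> keys p"
  proof -
    have "keys m \<subseteq> Y" using that assms(2) by (auto simp: Poly_iff)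
    then show ?thesis using assms(1) unfolding keys_eq_empty[symmetric] by blast
  qed
  then show "lookup (restrict_vars X p) m = lookup (single 0 (lookup p 0)) m"
    by (cases "m \<in> keys p") (auto simp: lookup_restrict_vars lookup_single when_def in_keys_iff)
qed

lemma Poly_disjoint_const:
  assumes "X \<inter> Y = {}" "p \<in> Poly X" "p \<in> Poly Y"
  shows "p = single 0 (lookup p 0)"
  using restrict_vars_Poly_disjoint[OF assms(1,3)] restrict_vars_Poly[OF assms(2)] by simp

lemma lookup_mult_zero: "lookup (p * q) 0 = lookup p 0 * lookup (q::'v mpoly) 0"
proof -
  have restrict_empty: "restrict_vars {} r = single 0 (lookup r 0)" for r :: "'v mpoly"
    using restrict_vars_Poly_disjoint[of "{}" UNIV r] by simp
  have "single (0::'v \<Rightarrow>\<^sub>0 nat) (lookup (p * q) 0) = single 0 (lookup p 0 * lookup q 0)"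
    using restrict_vars_mult[of "{}" p q] by (simp add: restrict_empty mult_single)
  then show ?thesis by (metis lookup_single_eq)
qed

section \<open>Degrees and the apolar action\<close>

definition mon_le :: "('v \<Rightarrow>\<^sub>0 nat) \<Rightarrow> ('v \<Rightarrow>\<^sub>0 nat) \<Rightarrow> bool" where
  "mon_le \<alpha> \<beta> \<longleftrightarrow> (\<forall>v. lookup \<alpha> v \<le> lookup \<beta> v)"

lemma Hom_iff: "p \<in> Hom X d \<longleftrightarrow> p \<in> Poly X \<and> (\<forall>m\<in>keys p. total_deg m = d)"
  by (simp add: Hom_def)

lemma total_deg_UNIV: "total_deg (m::'v::finite \<Rightarrow>\<^sub>0 nat) = (\<Sum>v\<in>UNIV. lookup m v)"
  unfolding total_deg_def by (intro sum.mono_neutral_left) (auto simp: in_keys_iff)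

lemma total_deg_add: "total_deg ((m::'v::finite \<Rightarrow>\<^sub>0 nat) + n) = total_deg m + total_deg n"
  by (simp add: total_deg_UNIV lookup_add sum.distrib)

lemma total_deg_diff:
  assumes "mon_le \<alpha> \<beta>"
  shows "total_deg ((\<beta>::'v::finite \<Rightarrow>\<^sub>0 nat) - \<alpha>) = total_deg \<beta> - total_deg \<alpha>"
proof -
  have "\<beta> = (\<beta> - \<alpha>) + \<alpha>"
    using assms by (intro poly_mapping_eqI) (simp add: mon_le_def lookup_add lookup_minus_nat)
  then have "total_deg \<beta> = total_deg (\<beta> - \<alpha>) + total_deg \<alpha>"
    by (metis total_deg_add)
  then show ?thesis by simp
qed

lemma total_deg_mono: "mon_le \<alpha> \<beta> \<Longrightarrow> total_deg (\<alpha>::'v::finite \<Rightarrow>\<^sub>0 nat) \<le> total_deg \<beta>"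
  unfolding total_deg_UNIV mon_le_def by (simp add: sum_mono)

lemma total_deg_eq_0_iff: "total_deg (m::'v::finite \<Rightarrow>\<^sub>0 nat) = 0 \<longleftrightarrow> m = 0"
  by (auto simp: total_deg_UNIV intro: poly_mapping_eqI)

lemma mon_le_antisym_total_deg:
  assumes "mon_le \<alpha> \<beta>" "total_deg (\<alpha>::'v::finite \<Rightarrow>\<^sub>0 nat) = total_deg \<beta>"
  shows "\<alpha> = \<beta>"
proof (rule poly_mapping_eqI)
  fix v
  have "\<beta> - \<alpha> = 0"
    using assms total_deg_diff[OF assms(1)] total_deg_eq_0_iff by (metis diff_self_eq_0)
  then have "lookup \<beta> v - lookup \<alpha> v = 0" by (metis lookup_minus_nat lookup_zero)
  then show "lookup \<alpha> v = lookup \<beta> v" using assms(1) by (simp add: mon_le_def le_antisym)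
qed

lemma finite_total_deg_le: "finite {m :: 'v::finite \<Rightarrow>\<^sub>0 nat. total_deg m \<le> d}"
proof -
  have "inj (lookup :: ('v \<Rightarrow>\<^sub>0 nat) \<Rightarrow> _)"
    by (rule injI) (simp add: poly_mapping_eqI)
  moreover have "finite {f :: 'v \<Rightarrow> nat. \<forall>x. (x \<in> UNIV \<longrightarrow> f x \<in> {..d}) \<and> (x \<notin> UNIV \<longrightarrow> f x = 0)}"
    by (rule finite_set_of_finite_funs) simp_all
  moreover have "lookup m v \<le> d" if "total_deg m \<le> d" for m :: "'v \<Rightarrow>\<^sub>0 nat" and v
    using that member_le_sum[of v UNIV "lookup m"] by (simp add: total_deg_UNIV)
  ultimately show ?thesis
    by (intro finite_subset[OF _ finite_vimageI[of _ lookup]]) auto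
qed

definition diff_coeff :: "('v \<Rightarrow>\<^sub>0 nat) \<Rightarrow> ('v \<Rightarrow>\<^sub>0 nat) \<Rightarrow> complex" where
  "diff_coeff \<alpha> \<beta> =
     (\<Prod>v\<in>keys \<beta>. of_nat (fact (lookup \<beta> v)) / of_nat (fact (lookup \<beta> v - lookup \<alpha> v)))"

definition mon_act :: "('v \<Rightarrow>\<^sub>0 nat) \<Rightarrow> ('v \<Rightarrow>\<^sub>0 nat) \<Rightarrow> complex \<Rightarrow> 'v mpoly" where
  "mon_act \<alpha> \<beta> c = (if mon_le \<alpha> \<beta> then single (\<beta> - \<alpha>) (c * diff_coeff \<alpha> \<beta>) else 0)"

lemma act_eq_sum_mon_act:
  "act g F = (\<Sum>\<alpha>\<in>keys g. \<Sum>\<beta>\<in>keys F. mon_act \<alpha> \<beta> (lookup g \<alpha> * lookup F \<beta>))"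
  unfolding act_def mon_act_def mon_le_def diff_coeff_def by (simp add: mult.assoc)

lemma mon_act_zero [simp]: "mon_act \<alpha> \<beta> 0 = 0"
  by (simp add: mon_act_def)

lemma mon_act_add: "mon_act \<alpha> \<beta> (x + y) = mon_act \<alpha> \<beta> x + mon_act \<alpha> \<beta> y"
  by (simp add: mon_act_def single_add distrib_right)

lemma mon_act_mult: "mon_act \<alpha> \<beta> (c * x) = smul c (mon_act \<alpha> \<beta> x)"
  by (simp add: mon_act_def smul_single mult.assoc)

lemma act_eq_sum_superset:
  assumes "finite A" "finite B" "keys g \<subseteq> A" "keys F \<subseteq> B"
  shows "act g F = (\<Sum>\<alpha>\<in>A. \<Sum>\<beta>\<in>B. mon_act \<alpha> \<beta> (lookup g \<alpha> * lookup F \<beta>))"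
  unfolding act_eq_sum_mon_act
  by (subst sum.mono_neutral_left[OF assms(1,3)], force simp: in_keys_iff)
    (intro sum.cong refl sum.mono_neutral_left assms(2,4), auto simp: in_keys_iff)

lemma act_add_left: "act (g + h) F = act g F + act h F"
  using keys_add[of g h]
  by (simp add: act_eq_sum_superset[of "keys g \<union> keys h" "keys F"] lookup_add distrib_right
      mon_act_add sum.distrib)

lemma act_add_right: "act g (F + G) = act g F + act g G"
  using keys_add[of F G]
  by (simp add: act_eq_sum_superset[of "keys g" "keys F \<union> keys G"] lookup_add distrib_left
      mon_act_add sum.distrib)

lemma act_zero_left [simp]: "act 0 F = 0"
  by (simp add: act_def)

lemma act_zero_right [simp]: "act g 0 = 0"
  by (simp add: act_def)

lemma act_sum_left: "act (\<Sum>i\<in>A. f i) F = (\<Sum>i\<in>A. act (f i) F)"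
  by (induction A rule: infinite_finite_induct) (auto simp: act_add_left)

lemma act_sum_right: "act g (\<Sum>i\<in>A. f i) = (\<Sum>i\<in>A. act g (f i))"
  by (induction A rule: infinite_finite_induct) (auto simp: act_add_right)

lemma act_diff_left: "act (g - h) F = act g F - act h F"
  using act_add_left[of "g - h" h F] by (simp add: algebra_simps)

lemma act_diff_right: "act g (F - G) = act g F - act g G"
  using act_add_right[of g "F - G" G] by (simp add: algebra_simps)

lemma act_smul_left: "act (smul c g) F = smul c (act g F)"
proof -
  have "keys (smul c g) \<subseteq> keys g"
    by (auto simp: in_keys_iff lookup_smul)
  then show ?thesis
    by (simp add: act_eq_sum_superset[of "keys g" "keys F"] lookup_smul smul_sum mult.assoc
        mon_act_mult)
qed

lemma act_single_single: "act (single \<alpha> a) (single \<beta> b) = mon_act \<alpha> \<beta> (a * b)"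
  by (simp add: act_eq_sum_superset[of "{\<alpha>}" "{\<beta>}"])

lemma act_single_left: "act (single \<gamma> b) F = (\<Sum>\<beta>\<in>keys F. mon_act \<gamma> \<beta> (b * lookup F \<beta>))"
  by (subst (2) sum_single_lookup[symmetric]) (simp add: act_sum_right act_single_single)

lemma act_const: "act (single 0 c) F = smul c F"
proof -
  have "act (single 0 c) F = (\<Sum>\<beta>\<in>keys F. single \<beta> (c * lookup F \<beta>))"
    by (simp add: act_single_left mon_act_def mon_le_def diff_coeff_def)
  also have "\<dots> = smul c F"
    by (subst (2) sum_single_lookup[symmetric]) (simp add: smul_sum smul_single)
  finally show ?thesis .
qed

lemma diff_coeff_add:
  assumes "mon_le (\<alpha> + \<gamma>) (\<beta>::'v::finite \<Rightarrow>\<^sub>0 nat)"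
  shows "diff_coeff \<gamma> \<beta> * diff_coeff \<alpha> (\<beta> - \<gamma>) = diff_coeff (\<alpha> + \<gamma>) \<beta>"
proof -
  have diff_coeff_UNIV: "diff_coeff \<alpha>' \<beta>' = (\<Prod>v\<in>UNIV.
      of_nat (fact (lookup \<beta>' v)) / of_nat (fact (lookup \<beta>' v - lookup \<alpha>' v)))"
    for \<alpha>' \<beta>' :: "'v \<Rightarrow>\<^sub>0 nat"
    unfolding diff_coeff_def by (intro prod.mono_neutral_left) (auto simp: in_keys_iff)
  have "(of_nat (fact b) / of_nat (fact (b - c))) * (of_nat (fact (b - c)) / of_nat (fact (b - c - a)))
      = (of_nat (fact b) / of_nat (fact (b - (a + c))) :: complex)" for a b c :: nat
    by (simp add: diff_diff_add add.commute)
  then show ?thesis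
    by (simp add: diff_coeff_UNIV lookup_minus_nat lookup_add flip: prod.distrib)
qed

lemma act_single_mon_act:
  "act (single \<alpha> a) (mon_act \<gamma> (\<beta>::'v::finite \<Rightarrow>\<^sub>0 nat) x) = mon_act (\<alpha> + \<gamma>) \<beta> (a * x)"
proof (cases "mon_le \<gamma> \<beta>")
  case False
  then have "\<not> mon_le (\<alpha> + \<gamma>) \<beta>"
    unfolding mon_le_def lookup_add by (metis add_leE)
  with False show ?thesis by (simp add: mon_act_def)
next
  case True
  then have "mon_le \<alpha> (\<beta> - \<gamma>) \<longleftrightarrow> mon_le (\<alpha> + \<gamma>) \<beta>"
    unfolding mon_le_def lookup_add lookup_minus_nat by (metis add.commute le_diff_conv2)
  moreover have "\<beta> - \<gamma> - \<alpha> = \<beta> - (\<alpha> + \<gamma>)"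
    by (rule poly_mapping_eqI) (simp add: lookup_minus_nat lookup_add)
  ultimately show ?thesis
    using True by (auto simp: mon_act_def act_single_single ac_simps simp flip: diff_coeff_add)
qed

lemma act_mult: "act (g * h) (F::'v::finite mpoly) = act g (act h F)"
proof -
  have single_comp: "act (single \<alpha> a) (act (single \<gamma> b) F) = act (single (\<alpha> + \<gamma>) (a * b)) F"
    for \<alpha> \<gamma> a b
    by (simp add: act_single_left[of \<gamma>] act_single_left[of "\<alpha> + \<gamma>"] act_sum_right
        act_single_mon_act mult.assoc)
  have "act g (act h F) = act (\<Sum>\<alpha>\<in>keys g. single \<alpha> (lookup g \<alpha>))
      (act (\<Sum>\<gamma>\<in>keys h. single \<gamma> (lookup h \<gamma>)) F)"
    by (simp only: sum_single_lookup)
  also have "\<dots> = (\<Sum>\<alpha>\<in>keys g. \<Sum>\<gamma>\<in>keys h.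
      act (single \<alpha> (lookup g \<alpha>)) (act (single \<gamma> (lookup h \<gamma>)) F))"
    by (simp add: act_sum_left act_sum_right sum.swap[of _ "keys h"])
  also have "\<dots> = act (g * h) F"
    by (simp add: single_comp mult_eq_sum_single[of g h] act_sum_left)
  finally show ?thesis by simp
qed

lemma keys_act:
  "keys (act g F) \<subseteq> {\<beta> - \<alpha> | \<alpha> \<beta>. \<alpha> \<in> keys g \<and> \<beta> \<in> keys F \<and> mon_le \<alpha> \<beta>}"
proof -
  have "keys (act g F)
      \<subseteq> (\<Union>\<alpha>\<in>keys g. \<Union>\<beta>\<in>keys F. keys (mon_act \<alpha> \<beta> (lookup g \<alpha> * lookup F \<beta>)))"
    unfolding act_eq_sum_mon_act
    by (rule order.trans[OF keys_sum], rule UN_mono[OF order_refl], rule keys_sum)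
  also have "\<dots> \<subseteq> {\<beta> - \<alpha> | \<alpha> \<beta>. \<alpha> \<in> keys g \<and> \<beta> \<in> keys F \<and> mon_le \<alpha> \<beta>}"
    by (fastforce simp: mon_act_def split: if_splits)
  finally show ?thesis .
qed

lemma act_in_Poly: "F \<in> Poly X \<Longrightarrow> act g F \<in> Poly X"
proof (unfold Poly_iff, intro ballI)
  fix m assume F: "\<forall>m\<in>keys F. keys m \<subseteq> X" and "m \<in> keys (act g F)"
  then obtain \<alpha> \<beta> where "m = \<beta> - \<alpha>" "\<beta> \<in> keys F" using keys_act[of g F] by blast
  moreover have "keys (\<beta> - \<alpha>) \<subseteq> keys \<beta>"
    by (auto simp: in_keys_iff lookup_minus_nat)
  ultimately show "keys m \<subseteq> X" using F by blast
qed

lemma act_restrict_vars: "F \<in> Poly X \<Longrightarrow> act (restrict_vars X g) F = act g F"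
proof -
  assume F: "F \<in> Poly X"
  have "keys (restrict_vars X g) \<subseteq> keys g"
    by (auto simp: in_keys_iff lookup_restrict_vars split: if_splits)
  then have "act (restrict_vars X g) F
      = (\<Sum>\<alpha>\<in>keys g. \<Sum>\<beta>\<in>keys F. mon_act \<alpha> \<beta> (lookup (restrict_vars X g) \<alpha> * lookup F \<beta>))"
    by (intro act_eq_sum_superset) simp_all
  also have "\<dots> = act g F"
    unfolding act_eq_sum_mon_act
  proof (intro sum.cong refl)
    fix \<alpha> \<beta> assume "\<beta> \<in> keys F"
    then have "keys \<beta> \<subseteq> X" using F by (auto simp: Poly_iff)
    moreover have "keys \<alpha> \<subseteq> keys \<beta>" if "mon_le \<alpha> \<beta>"
      using that unfolding mon_le_def by (metis in_keys_iff le_zero_eq subsetI)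
    ultimately show "mon_act \<alpha> \<beta> (lookup (restrict_vars X g) \<alpha> * lookup F \<beta>)
        = mon_act \<alpha> \<beta> (lookup g \<alpha> * lookup F \<beta>)"
      by (cases "mon_le \<alpha> \<beta>") (auto simp: mon_act_def lookup_restrict_vars)
  qed
  finally show ?thesis .
qed

lemma act_Hom: "g \<in> Hom Y k \<Longrightarrow> F \<in> Hom X d \<Longrightarrow> act g (F::'v::finite mpoly) \<in> Hom X (d - k)"
  using keys_act[of g F] act_in_Poly[of F X g] total_deg_diff by (fastforce simp: Hom_iff)

lemma act_eq_0_if_total_deg_gt:
  assumes "\<forall>\<alpha>\<in>keys g. total_deg \<alpha> > d" "F \<in> Hom X d"
  shows "act g (F::'v::finite mpoly) = 0"
  unfolding act_eq_sum_mon_act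
proof (intro sum.neutral ballI)
  fix \<alpha> \<beta> assume "\<alpha> \<in> keys g" "\<beta> \<in> keys F"
  then have "\<not> mon_le \<alpha> \<beta>" using assms total_deg_mono by (fastforce simp: Hom_iff)
  then show "mon_act \<alpha> \<beta> (lookup g \<alpha> * lookup F \<beta>) = 0" by (simp add: mon_act_def)
qed

section \<open>Generated ideals\<close>

lemma ideal_gen_iff:
  "p \<in> ideal_gen X G \<longleftrightarrow>
     (\<exists>A f. finite A \<and> A \<subseteq> G \<and> (\<forall>a\<in>A. f a \<in> Poly X) \<and> p = (\<Sum>a\<in>A. f a * a))"
  by (simp add: ideal_gen_def)

lemma ideal_gen_zero: "0 \<in> ideal_gen X G"
  unfolding ideal_gen_iff by (rule exI[of _ "{}"]) simp

lemma ideal_gen_base: "g \<in> G \<Longrightarrow> g \<in> ideal_gen X G"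
  unfolding ideal_gen_iff by (intro exI[of _ "{g}"] exI[of _ "\<lambda>_. 1"]) (auto intro: Poly_one)

lemma ideal_gen_add:
  assumes "p \<in> ideal_gen X G" "q \<in> ideal_gen X G"
  shows "p + q \<in> ideal_gen X G"
proof -
  obtain A f where A: "finite A" "A \<subseteq> G" "\<forall>a\<in>A. f a \<in> Poly X" "p = (\<Sum>a\<in>A. f a * a)"
    using assms(1) by (auto simp: ideal_gen_iff)
  obtain B f' where B: "finite B" "B \<subseteq> G" "\<forall>a\<in>B. f' a \<in> Poly X" "q = (\<Sum>a\<in>B. f' a * a)"
    using assms(2) by (auto simp: ideal_gen_iff)
  define h where "h a = (if a \<in> A then f a else 0) + (if a \<in> B then f' a else 0)" for a
  have "h a * a = (if a \<in> A then f a * a else 0) + (if a \<in> B then f' a * a else 0)" for a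
    by (simp add: h_def distrib_right)
  then have "(\<Sum>a\<in>A \<union> B. h a * a)
      = (\<Sum>a\<in>A \<union> B. if a \<in> A then f a * a else 0) + (\<Sum>a\<in>A \<union> B. if a \<in> B then f' a * a else 0)"
    by (simp add: sum.distrib)
  also have "\<dots> = p + q"
    using A B by (simp add: sum.If_cases Int_absorb1 Int_absorb2)
  finally have "p + q = (\<Sum>a\<in>A \<union> B. h a * a)" by simp
  moreover have "\<forall>a\<in>A \<union> B. h a \<in> Poly X"
    using A B by (auto simp: h_def intro!: Poly_add Poly_zero)
  ultimately show ?thesis
    using A B unfolding ideal_gen_iff by (intro exI[of _ "A \<union> B"] exI[of _ h]) auto
qed

lemma ideal_gen_mult:
  assumes "h \<in> Poly X" "p \<in> ideal_gen X G"
  shows "h * p \<in> ideal_gen X G"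
proof -
  obtain A f where A: "finite A" "A \<subseteq> G" "\<forall>a\<in>A. f a \<in> Poly X" "p = (\<Sum>a\<in>A. f a * a)"
    using assms(2) by (auto simp: ideal_gen_iff)
  then have "h * p = (\<Sum>a\<in>A. (h * f a) * a)"
    by (simp add: sum_distrib_left mult.assoc)
  then show ?thesis
    using A assms(1) unfolding ideal_gen_iff
    by (intro exI[of _ A] exI[of _ "\<lambda>a. h * f a"]) (auto intro: Poly_mult)
qed

lemma ideal_gen_sum:
  "(\<And>i. i \<in> I \<Longrightarrow> f i \<in> ideal_gen X G) \<Longrightarrow> (\<Sum>i\<in>I. f i) \<in> ideal_gen X G"
  by (induction I rule: infinite_finite_induct) (auto intro: ideal_gen_add ideal_gen_zero)

lemma subspace_ideal_gen: "V.subspace (ideal_gen X G)"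
  unfolding V.subspace_def smul_def
  using ideal_gen_zero ideal_gen_add ideal_gen_mult[OF Poly_const] by blast

lemma ideal_gen_mono:
  assumes "X \<subseteq> X'" "G \<subseteq> G'"
  shows "ideal_gen X G \<subseteq> ideal_gen X' G'"
proof
  fix p assume "p \<in> ideal_gen X G"
  then obtain A f where A: "finite A" "A \<subseteq> G" "\<forall>a\<in>A. f a \<in> Poly X" "p = (\<Sum>a\<in>A. f a * a)"
    by (auto simp: ideal_gen_iff)
  then show "p \<in> ideal_gen X' G'"
    using assms Poly_mono unfolding ideal_gen_iff by (intro exI[of _ A] exI[of _ f]) blast
qed

lemma lookup_zero_ideal_gen:
  assumes "\<forall>a\<in>G. lookup a 0 = 0" "p \<in> ideal_gen X G"
  shows "lookup p 0 = 0"
proof -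
  obtain A f where "A \<subseteq> G" "p = (\<Sum>a\<in>A. f a * a)"
    using assms(2) by (auto simp: ideal_gen_iff)
  then show ?thesis
    using assms(1) by (auto simp: lookup_sum lookup_mult_zero intro!: sum.neutral)
qed

lemma diff_restrict_vars_in_ideal_gen:
  assumes "X \<union> Y = UNIV"
  shows "p - restrict_vars X p \<in> ideal_gen UNIV (LinForms Y)"
proof -
  have "p - restrict_vars X p = (\<Sum>m\<in>{m\<in>keys p. \<not> keys m \<subseteq> X}. single m (lookup p m))"
  proof (rule poly_mapping_eqI)
    fix k
    have "(\<Sum>m\<in>{m\<in>keys p. \<not> keys m \<subseteq> X}. lookup (single m (lookup p m)) k)
        = (if keys k \<subseteq> X then 0 else lookup p k)"
      by (cases "k \<in> keys p") (auto simp: lookup_single when_def in_keys_iff)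
    then show "lookup (p - restrict_vars X p) k
        = lookup (\<Sum>m\<in>{m\<in>keys p. \<not> keys m \<subseteq> X}. single m (lookup p m)) k"
      by (simp add: lookup_sum lookup_minus lookup_restrict_vars)
  qed
  moreover have "single m c \<in> ideal_gen UNIV (LinForms Y)" if m: "\<not> keys m \<subseteq> X" for m c
  proof -
    obtain v where v: "v \<in> keys m" "v \<in> Y" using m assms by blast
    define e where "e = (single v 1 :: 'a \<Rightarrow>\<^sub>0 nat)"
    have "m - e + e = m"
      using v(1) by (intro poly_mapping_eqI)
        (auto simp: e_def lookup_add lookup_minus_nat lookup_single when_def in_keys_iff)
    then have "single m c = single (m - e) c * single e 1"
      by (simp add: mult_single)
    moreover have "single e (1::complex) \<in> LinForms Y"
      using v(2) by (auto simp: LinForms_def Hom_iff Poly_iff e_def total_deg_def)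
    ultimately show ?thesis
      by (metis ideal_gen_base ideal_gen_mult Poly_UNIV)
  qed
  ultimately show ?thesis by (auto intro: ideal_gen_sum)
qed

section \<open>Perp ideals of homogeneous forms\<close>

lemma lookup_zero_if_act_eq_0:
  assumes F: "F \<in> Hom X d" "F \<noteq> (0::'v::finite mpoly)" and g: "act g F = 0"
  shows "lookup g 0 = 0"
proof -
  obtain \<beta> where \<beta>: "\<beta> \<in> keys F" using F(2) by fastforce
  define g' where "g' = g - single 0 (lookup g 0)"
  have "\<beta> \<notin> keys (act g' F)"
  proof
    assume "\<beta> \<in> keys (act g' F)"
    then obtain \<alpha> \<beta>' where \<alpha>\<beta>': "\<beta> = \<beta>' - \<alpha>" "\<alpha> \<in> keys g'" "\<beta>' \<in> keys F" "mon_le \<alpha> \<beta>'"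
      using keys_act[of g' F] by blast
    have "\<alpha> \<noteq> 0" using \<alpha>\<beta>'(2) by (auto simp: g'_def in_keys_iff lookup_minus)
    then have "total_deg \<alpha> > 0" by (metis gr0I total_deg_eq_0_iff)
    moreover have "total_deg \<alpha> \<le> total_deg \<beta>'" using \<alpha>\<beta>'(4) by (rule total_deg_mono)
    moreover have "total_deg \<beta> = total_deg \<beta>' - total_deg \<alpha>"
      using \<alpha>\<beta>'(1,4) by (simp add: total_deg_diff)
    moreover have "total_deg \<beta> = d" "total_deg \<beta>' = d"
      using F(1) \<beta> \<alpha>\<beta>'(3) by (auto simp: Hom_iff)
    ultimately show False by linarith
  qed
  moreover have "act g F = smul (lookup g 0) F + act g' F"
    by (simp add: g'_def act_diff_left act_const)
  ultimately have "lookup (act g F) \<beta> = lookup g 0 * lookup F \<beta>"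
    by (simp add: lookup_add lookup_smul in_keys_iff)
  then show ?thesis using g \<beta> by (simp add: in_keys_iff)
qed

lemma exists_dual_monomial:
  assumes "G \<in> Hom X k" "G \<noteq> (0::'v::finite mpoly)"
  obtains \<beta> c where "keys \<beta> \<subseteq> X" "total_deg \<beta> = k" "act (single \<beta> c) G = 1"
proof -
  obtain \<beta> where \<beta>: "\<beta> \<in> keys G" using assms(2) by fastforce
  define c where "c = 1 / (lookup G \<beta> * diff_coeff \<beta> \<beta>)"
  have "act (single \<beta> c) G = (\<Sum>\<beta>'\<in>{\<beta>}. mon_act \<beta> \<beta>' (c * lookup G \<beta>'))"
    unfolding act_single_left
  proof (rule sum.mono_neutral_right)
    show "\<forall>\<beta>'\<in>keys G - {\<beta>}. mon_act \<beta> \<beta>' (c * lookup G \<beta>') = 0"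
    proof
      fix \<beta>' assume \<beta>': "\<beta>' \<in> keys G - {\<beta>}"
      then have "total_deg \<beta> = total_deg \<beta>'" using assms(1) \<beta> by (simp add: Hom_iff)
      then have "\<not> mon_le \<beta> \<beta>'" using \<beta>' mon_le_antisym_total_deg by blast
      then show "mon_act \<beta> \<beta>' (c * lookup G \<beta>') = 0" by (simp add: mon_act_def)
    qed
  qed (use \<beta> in auto)
  also have "\<dots> = 1"
    using \<beta> by (simp add: mon_act_def mon_le_def c_def in_keys_iff diff_coeff_def)
  finally show ?thesis
    using that \<beta> assms(1) by (auto simp: Hom_iff Poly_iff)
qed

lemma lookup_zero_Hom:
  assumes "p \<in> Hom X k" "k \<ge> 1"
  shows "lookup p 0 = 0"
proof -
  have "0 \<notin> keys p"
    using assms by (auto simp: Hom_iff total_deg_def)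
  then show ?thesis by (simp add: in_keys_iff)
qed

lemma restrict_vars_Hom_disjoint:
  assumes "X \<inter> Y = {}" "p \<in> Hom Y k" "k \<ge> 1"
  shows "restrict_vars X p = 0"
  using restrict_vars_Poly_disjoint[OF assms(1)] lookup_zero_Hom[OF assms(2,3)] assms(2)
  by (simp add: Hom_iff)

text \<open>Since \<open>l F \<noteq> 0\<close> has degree \<open>d - 1 \<ge> 1\<close>, some \<open>h\<close> of degree \<open>d - 1\<close> in the variables of
  \<open>F\<close> inverts \<open>l\<close> on \<open>F\<close>; having positive degree, \<open>h\<close> vanishes on the other variables.\<close>

lemma exists_inverse_linear_form:
  assumes "X \<inter> Y = {}" "d \<ge> 2" "F \<in> Hom X d" "l \<in> LinForms X"
    and "act l F \<noteq> (0::'v::finite mpoly)"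
  obtains h where "h \<in> Poly X" "restrict_vars Y h = 0" "act (h * l) F = 1"
proof -
  have "act l F \<in> Hom X (d - 1)"
    using act_Hom assms(3,4) by (simp add: LinForms_def)
  then obtain \<beta> c where \<beta>: "keys \<beta> \<subseteq> X" "total_deg \<beta> = d - 1" "act (single \<beta> c) (act l F) = 1"
    using exists_dual_monomial assms(5) by metis
  have "single \<beta> c \<in> Hom X (d - 1)"
    using \<beta> by (auto simp: Hom_iff Poly_iff)
  then have "restrict_vars Y (single \<beta> c) = 0"
    using restrict_vars_Hom_disjoint[of Y X] assms(1,2) by (simp add: Int_commute)
  then show ?thesis
    by (intro that[of "single \<beta> c"]) (simp_all add: \<beta> Poly_single act_mult)
qed

lemma act_eq_0_if_ideal_gen:
  assumes "\<And>a. a \<in> G \<Longrightarrow> act a H = 0" "p \<in> ideal_gen X G"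
  shows "act p (H::'v::finite mpoly) = 0"
proof -
  obtain A f where "A \<subseteq> G" "p = (\<Sum>a\<in>A. f a * a)"
    using assms(2) by (auto simp: ideal_gen_iff)
  then show ?thesis
    using assms(1) by (auto simp: act_sum_left act_mult intro!: sum.neutral)
qed

section \<open>Dimension of a quotient\<close>

definition span_mod :: "'v mpoly set \<Rightarrow> 'v mpoly set \<Rightarrow> 'v mpoly set" where
  "span_mod I S = {s + i | s i. s \<in> V.span S \<and> i \<in> I}"

definition indep_mod :: "'v mpoly set \<Rightarrow> 'v mpoly set \<Rightarrow> bool" where
  "indep_mod I E \<longleftrightarrow> (\<forall>c. (\<Sum>e\<in>E. smul (c e) e) \<in> I \<longrightarrow> (\<forall>e\<in>E. c e = 0))"

lemma spans_mod_iff: "spans_mod R I S \<longleftrightarrow> finite S \<and> S \<subseteq> R \<and> R \<subseteq> span_mod I S"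
proof -
  have "finite S \<Longrightarrow> cspan S = V.span S"
    by (simp add: cspan_def V.span_finite smul_def image_def)
  then show ?thesis
    unfolding spans_mod_def span_mod_def by auto
qed

lemma subspace_span_mod: "V.subspace I \<Longrightarrow> V.subspace (span_mod I S)"
  unfolding span_mod_def by (rule V.subspace_sums) auto

lemma span_subset_span_mod: "V.subspace I \<Longrightarrow> V.span S \<subseteq> span_mod I S"
  unfolding span_mod_def using V.subspace_0 by force

lemma subset_span_mod: "V.subspace I \<Longrightarrow> I \<subseteq> span_mod I S"
  unfolding span_mod_def using V.span_zero by force

lemma span_mod_mono:
  assumes I: "V.subspace I" and "S \<subseteq> span_mod I T"
  shows "span_mod I S \<subseteq> span_mod I T"
proof
  fix x assume "x \<in> span_mod I S"
  then obtain s i where x: "x = s + i" "s \<in> V.span S" "i \<in> I" by (auto simp: span_mod_def)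
  have "V.span S \<subseteq> span_mod I T" using assms by (intro V.span_minimal subspace_span_mod)
  then show "x \<in> span_mod I T"
    using x subset_span_mod[OF I] subspace_span_mod[OF I] V.subspace_add by blast
qed

lemma spans_mod_if_subset_span_mod:
  assumes I: "V.subspace I" and "spans_mod R I S" "finite S'" "S' \<subseteq> R" "S \<subseteq> span_mod I S'"
  shows "spans_mod R I S'"
  using assms span_mod_mono[OF I, of S S'] by (auto simp: spans_mod_iff)

lemma mem_span_mod_exchange:
  assumes I: "V.subspace I" and S: "finite S" "s\<^sub>0 \<in> S" "u s\<^sub>0 \<noteq> 0"
    and x: "(\<Sum>v\<in>S. smul (u v) v) - x \<in> I"
  shows "s\<^sub>0 \<in> span_mod I (insert x (S - {s\<^sub>0}))"
proof -
  define r where "r = (\<Sum>v\<in>S - {s\<^sub>0}. smul (u v) v)"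
  have sum: "(\<Sum>v\<in>S. smul (u v) v) = smul (u s\<^sub>0) s\<^sub>0 + r"
    using sum.remove[OF S(1,2)] by (simp add: r_def)
  have "smul (inverse (u s\<^sub>0)) (x - r) + smul (inverse (u s\<^sub>0)) ((\<Sum>v\<in>S. smul (u v) v) - x)
      = smul (inverse (u s\<^sub>0)) (smul (u s\<^sub>0) s\<^sub>0)"
    by (simp add: sum flip: V.scale_right_distrib)
  also have "\<dots> = s\<^sub>0"
    using S(3) by simp
  finally have "s\<^sub>0 = smul (inverse (u s\<^sub>0)) (x - r)
      + smul (inverse (u s\<^sub>0)) ((\<Sum>v\<in>S. smul (u v) v) - x)" ..
  moreover have "smul (inverse (u s\<^sub>0)) (x - r) \<in> V.span (insert x (S - {s\<^sub>0}))"
    unfolding r_def by (intro V.span_scale V.span_diff V.span_sum V.span_base) auto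
  moreover have "smul (inverse (u s\<^sub>0)) ((\<Sum>v\<in>S. smul (u v) v) - x) \<in> I"
    using I x by (rule V.subspace_scale)
  ultimately show ?thesis
    unfolding span_mod_def by blast
qed

lemma spans_mod_exchange:
  assumes I: "V.subspace I" and S: "spans_mod R I S" and x: "x \<in> R" "x \<notin> I"
  obtains S' where "spans_mod R I S'" "x \<in> S'" "card S' \<le> card S"
proof -
  have fin: "finite S" and R: "S \<subseteq> R" "R \<subseteq> span_mod I S"
    using S by (auto simp: spans_mod_iff)
  obtain s i where si: "x = s + i" "s \<in> V.span S" "i \<in> I"
    using R(2) x(1) by (auto simp: span_mod_def)
  obtain u where u: "s = (\<Sum>v\<in>S. smul (u v) v)"
    using si(2) V.span_finite[OF fin] by auto
  have "\<exists>s\<^sub>0\<in>S. u s\<^sub>0 \<noteq> 0"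
  proof (rule ccontr)
    assume "\<not> (\<exists>s\<^sub>0\<in>S. u s\<^sub>0 \<noteq> 0)"
    then have "s = 0" using u by simp
    then show False using si x(2) by simp
  qed
  then obtain s\<^sub>0 where s\<^sub>0: "s\<^sub>0 \<in> S" "u s\<^sub>0 \<noteq> 0" by blast
  define S' where "S' = insert x (S - {s\<^sub>0})"
  have "(\<Sum>v\<in>S. smul (u v) v) - x = - i"
    using si u by simp
  then have "(\<Sum>v\<in>S. smul (u v) v) - x \<in> I"
    using V.subspace_neg[OF I si(3)] by simp
  then have "s\<^sub>0 \<in> span_mod I S'"
    unfolding S'_def by (rule mem_span_mod_exchange[where u = u, OF I fin s\<^sub>0])
  moreover have "S - {s\<^sub>0} \<subseteq> span_mod I S'"
    using span_subset_span_mod[OF I, of S'] V.span_base[of _ S'] unfolding S'_def by blast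
  ultimately have "spans_mod R I S'"
    using fin R x(1) by (intro spans_mod_if_subset_span_mod[OF I S]) (auto simp: S'_def)
  moreover have "card S' \<le> card S"
  proof -
    have "card (S - {s\<^sub>0}) < card S" using fin s\<^sub>0(1) by (rule card_Diff1_less)
    then show ?thesis using fin by (simp add: S'_def card_insert_if)
  qed
  ultimately show ?thesis
    using that by (simp add: S'_def)
qed

lemma indep_mod_if_card_minimal:
  assumes I: "V.subspace I" and S: "spans_mod R I S"
    and min: "\<And>S'. spans_mod R I S' \<Longrightarrow> card S \<le> card S'"
  shows "indep_mod I S"
  unfolding indep_mod_def
proof (intro allI impI ballI, rule ccontr)
  fix c s\<^sub>0 assume c: "(\<Sum>e\<in>S. smul (c e) e) \<in> I" and s\<^sub>0: "s\<^sub>0 \<in> S" "c s\<^sub>0 \<noteq> 0"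
  have fin: "finite S" and R: "S \<subseteq> R" "R \<subseteq> span_mod I S"
    using S by (auto simp: spans_mod_iff)
  have "s\<^sub>0 \<in> span_mod I (insert 0 (S - {s\<^sub>0}))"
    using c by (intro mem_span_mod_exchange[where u = c, OF I fin s\<^sub>0]) simp
  then have "s\<^sub>0 \<in> span_mod I (S - {s\<^sub>0})"
    by (simp add: span_mod_def V.span_insert_0)
  then have "S \<subseteq> span_mod I (S - {s\<^sub>0})"
    using span_subset_span_mod[OF I, of "S - {s\<^sub>0}"] V.span_base[of _ "S - {s\<^sub>0}"] by blast
  then have "spans_mod R I (S - {s\<^sub>0})"
    using fin R by (intro spans_mod_if_subset_span_mod[OF I S]) auto
  then have "card S \<le> card (S - {s\<^sub>0})" by (rule min)
  moreover have "card (S - {s\<^sub>0}) < card S" using fin s\<^sub>0(1) by (rule card_Diff1_less)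
  ultimately show False by linarith
qed

lemma indep_mod_subset:
  assumes "indep_mod I S" "T \<subseteq> S" "finite S"
  shows "indep_mod I T"
  unfolding indep_mod_def
proof (intro allI impI)
  fix c assume c: "(\<Sum>e\<in>T. smul (c e) e) \<in> I"
  define c' where "c' e = (if e \<in> T then c e else 0)" for e
  have "(\<Sum>e\<in>S. smul (c' e) e) = (\<Sum>e\<in>T. smul (c e) e)"
    using assms(2,3) by (intro sum.mono_neutral_cong_right) (auto simp: c'_def)
  then have "\<forall>e\<in>S. c' e = 0"
    using assms(1) c unfolding indep_mod_def by metis
  then show "\<forall>e\<in>T. c e = 0"
    using assms(2) unfolding c'_def by (metis subsetD)
qed

lemma notin_if_indep_mod:
  assumes "indep_mod I S" "finite S" "a \<in> S"
  shows "a \<notin> I"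
proof
  assume "a \<in> I"
  have "indep_mod I {a}"
    using indep_mod_subset assms by blast
  then have "(\<Sum>e\<in>{a}. smul 1 e) \<in> I \<longrightarrow> (\<forall>e\<in>{a}. (1::complex) = 0)"
    unfolding indep_mod_def by (rule spec)
  then show False
    using \<open>a \<in> I\<close> by simp
qed

lemma const_eq_one_if_indep_mod:
  fixes E :: "'v mpoly set"
  assumes "V.subspace I" "indep_mod I E" "finite E" "1 \<in> E" "single 0 k \<in> E"
  shows "single 0 k = (1 :: 'v mpoly)"
proof (rule ccontr)
  assume ne: "single 0 k \<noteq> (1 :: 'v mpoly)"
  define c where "c e = (if e = 1 then - k else 1)" for e :: "'v mpoly"
  have "(\<Sum>e\<in>{single 0 k, 1}. smul (c e) e) = smul 1 (single 0 k) + smul (- k) 1"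
    using ne by (subst sum.insert) (auto simp: c_def)
  also have "\<dots> = 0"
    by (simp add: smul_def mult_single flip: single_add)
  finally have "(\<Sum>e\<in>{single 0 k, 1}. smul (c e) e) \<in> I"
    using V.subspace_0[OF assms(1)] by simp
  moreover have "indep_mod I {single 0 k, 1}"
    using assms(4,5) by (intro indep_mod_subset[OF assms(2) _ assms(3)]) auto
  ultimately have "c (single 0 k) = 0"
    unfolding indep_mod_def by blast
  then show False
    using ne by (simp add: c_def)
qed

lemma indep_mod_coeffs_vanish_off_one:
  fixes E :: "'v mpoly set"
  assumes "indep_mod I E" "finite E" "1 \<in> E"
    and "single 0 k + (\<Sum>e\<in>E - {1}. smul (c e) e) \<in> I"
  shows "\<forall>e\<in>E - {1}. c e = 0"
proof -
  have "(\<Sum>e\<in>E. smul ((c(1 := k)) e) e)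
      = smul k 1 + (\<Sum>e\<in>E - {1}. smul ((c(1 := k)) e) e)"
    by (subst sum.remove[OF assms(2,3)]) simp_all
  also have "\<dots> = single 0 k + (\<Sum>e\<in>E - {1}. smul (c e) e)"
    by (simp add: smul_def)
  finally have "(\<Sum>e\<in>E. smul ((c(1 := k)) e) e) \<in> I"
    using assms(4) by simp
  then have "\<forall>e\<in>E. (c(1 := k)) e = 0"
    using assms(1) unfolding indep_mod_def by blast
  then show ?thesis
    by (metis DiffE fun_upd_other singletonI)
qed

lemma scale_eq_0_if_notin_subspace:
  assumes "V.subspace I" "smul a x \<in> I" "x \<notin> I"
  shows "a = 0"
proof (rule ccontr)
  assume "a \<noteq> 0"
  then have "x = smul (inverse a) (smul a x)"
    by simp
  also have "\<dots> \<in> I"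
    using V.subspace_scale[OF assms(1,2)] .
  finally show False
    using assms(3) by blast
qed

lemma independent_Un_if_indep_mod:
  assumes I: "V.subspace I" and E: "finite E" "indep_mod I E"
    and B: "finite B" "V.independent B" "B \<subseteq> I"
  shows "V.independent (E \<union> B)" "E \<inter> B = {}"
proof -
  show disj: "E \<inter> B = {}"
    using notin_if_indep_mod[OF E(2,1)] B(3) by blast
  show "V.independent (E \<union> B)"
  proof
    assume "V.dependent (E \<union> B)"
    then obtain u where u: "\<exists>v\<in>E \<union> B. u v \<noteq> 0" "(\<Sum>v\<in>E \<union> B. smul (u v) v) = 0"
      using V.dependent_finite[of "E \<union> B"] E(1) B(1) by auto
    then have eq: "(\<Sum>v\<in>E. smul (u v) v) = - (\<Sum>v\<in>B. smul (u v) v)"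
      by (simp add: sum.union_disjoint[OF E(1) B(1) disj] eq_neg_iff_add_eq_0)
    have "(\<Sum>v\<in>B. smul (u v) v) \<in> I"
      using B(3) by (intro V.subspace_sum[OF I] V.subspace_scale[OF I]) auto
    then have "(\<Sum>v\<in>E. smul (u v) v) \<in> I"
      unfolding eq using I V.subspace_neg by blast
    then have uE: "\<forall>v\<in>E. u v = 0"
      using E(2) unfolding indep_mod_def by blast
    then have "(\<Sum>v\<in>B. smul (u v) v) = 0"
      using eq by simp
    then have "\<forall>v\<in>B. u v = 0"
      using V.dependent_finite[OF B(1)] B(2) by blast
    then show False using u(1) uE by blast
  qed
qed

text \<open>Independence modulo \<open>I\<close> bounds the size of every spanning set modulo \<open>I\<close>: complete the
  \<open>I\<close>-parts needed to express \<open>E\<close> through \<open>S\<close> by a basis \<open>B\<close> of their span.\<close>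

lemma card_le_if_indep_mod:
  assumes I: "V.subspace I" and E: "finite E" "indep_mod I E"
    and S: "finite S" "E \<subseteq> span_mod I S"
  shows "card E \<le> card S"
proof -
  have "\<forall>e\<in>E. \<exists>i. i \<in> I \<and> e - i \<in> V.span S"
    using S(2) unfolding span_mod_def by force
  then obtain j where j: "\<And>e. e \<in> E \<Longrightarrow> j e \<in> I \<and> e - j e \<in> V.span S"
    by metis
  obtain B where B: "B \<subseteq> j ` E" "V.independent B" "j ` E \<subseteq> V.span B"
    using V.maximal_independent_subset by blast
  have fin: "finite B" using B(1) E(1) finite_subset by blast
  have "B \<subseteq> I" using B(1) j by blast
  note EB = independent_Un_if_indep_mod[OF I E fin B(2) this]
  have "E \<subseteq> V.span (S \<union> B)"
  proof
    fix e assume e: "e \<in> E"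
    have "e - j e \<in> V.span (S \<union> B)" "j e \<in> V.span (S \<union> B)"
      using j[OF e] B(3) e V.span_mono[of S "S \<union> B"] V.span_mono[of B "S \<union> B"] by blast+
    then show "e \<in> V.span (S \<union> B)"
      using V.span_add by fastforce
  qed
  then have "E \<union> B \<subseteq> V.span (S \<union> B)"
    using V.span_superset by blast
  then have "card (E \<union> B) \<le> card (S \<union> B)"
    using V.independent_span_bound[OF _ EB(1)] S(1) fin by blast
  then show ?thesis
    using card_Un_disjoint[OF E(1) fin EB(2)] card_Un_le[of S B] by linarith
qed

lemma card_le_quot_dim:
  assumes "V.subspace I" "finite E" "E \<subseteq> R" "indep_mod I E"
  shows "enat (card E) \<le> quot_dim R I"
proof (cases "\<exists>S. spans_mod R I S")
  case True
  then obtain S where "spans_mod R I S" "card S = (LEAST n. \<exists>S. spans_mod R I S \<and> card S = n)"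
    using LeastI_ex[of "\<lambda>n. \<exists>S. spans_mod R I S \<and> card S = n"] by blast
  moreover have "card E \<le> card S"
    using card_le_if_indep_mod assms \<open>spans_mod R I S\<close> by (force simp: spans_mod_iff)
  ultimately show ?thesis
    using True by (simp add: quot_dim_def)
qed (simp add: quot_dim_def)

text \<open>A spanning set of minimal size is a basis, and by exchange it can be made to contain \<open>x\<close>.\<close>

lemma exists_quot_basis:
  assumes I: "V.subspace I" and "spans_mod R I S\<^sub>0" "x \<in> R" "x \<notin> I"
  obtains S where "spans_mod R I S" "indep_mod I S" "x \<in> S" "quot_dim R I = enat (card S)"
proof -
  let ?n = "LEAST n. \<exists>S. spans_mod R I S \<and> card S = n"
  obtain S where S: "spans_mod R I S" "card S = ?n"
    using LeastI_ex[of "\<lambda>n. \<exists>S. spans_mod R I S \<and> card S = n"] assms(2) by blast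
  then have min: "card S \<le> card S'" if "spans_mod R I S'" for S'
    using that by (auto intro: Least_le)
  obtain S' where S': "spans_mod R I S'" "x \<in> S'" "card S' \<le> card S"
    using spans_mod_exchange[OF I S(1) assms(3,4)] by blast
  have "card S' = card S"
    using min[OF S'(1)] S'(3) by simp
  then have "indep_mod I S'"
    using min S'(1) by (intro indep_mod_if_card_minimal[OF I]) auto
  moreover have "quot_dim R I = enat (card S')"
    using S S'(1) \<open>card S' = card S\<close> by (auto simp: quot_dim_def)
  ultimately show ?thesis
    using that S' by blast
qed

text \<open>Modulo the perp ideal of a form of degree \<open>d\<close>, every polynomial reduces to its part of
  degree at most \<open>d\<close>; so the quotient is finite-dimensional.\<close>

lemma exists_low_degree_part:
  assumes F: "F \<in> Hom X d" and p: "p \<in> Poly X"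
  obtains q where "q \<in> V.span ((\<lambda>m. single m 1) ` {m. keys m \<subseteq> X \<and> total_deg m \<le> d})"
    "p - q \<in> perp X (F :: 'v::finite mpoly)"
proof -
  define q where "q = (\<Sum>m\<in>{m\<in>keys p. total_deg m \<le> d}. single m (lookup p m))"
  have lookup_q: "lookup q k = (if total_deg k \<le> d then lookup p k else 0)" for k
  proof -
    have "(\<Sum>m\<in>{m\<in>keys p. total_deg m \<le> d}. lookup (single m (lookup p m)) k)
        = (if total_deg k \<le> d then lookup p k else 0)"
      by (cases "k \<in> keys p") (auto simp: lookup_single when_def in_keys_iff)
    then show ?thesis by (simp add: q_def lookup_sum)
  qed
  let ?B = "(\<lambda>m. single m 1) ` {m. keys m \<subseteq> X \<and> total_deg m \<le> d}"
  have "smul (lookup p m) (single m 1) \<in> V.span ?B" if "m \<in> keys p" "total_deg m \<le> d" for m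
    using that p by (intro V.span_scale V.span_base) (auto simp: Poly_iff)
  then have "q \<in> V.span ?B"
    unfolding q_def by (intro V.span_sum) (simp add: smul_single)
  moreover have "\<forall>\<alpha>\<in>keys (p - q). total_deg \<alpha> > d"
    by (auto simp: in_keys_iff lookup_minus lookup_q split: if_splits)
  then have "act (p - q) F = 0"
    using F by (rule act_eq_0_if_total_deg_gt)
  moreover have "q \<in> Poly X"
    unfolding q_def using p by (intro Poly_sum Poly_single) (auto simp: Poly_iff)
  ultimately show ?thesis
    using that p by (simp add: perp_def Poly_diff)
qed

lemma spans_mod_exists:
  assumes F: "F \<in> Hom X d" and G: "perp X F \<subseteq> G"
  shows "\<exists>S. spans_mod (Poly X) (ideal_gen X G) (S :: 'v::finite mpoly set)"
proof -
  define S where "S = (\<lambda>m. single m (1::complex)) ` {m. keys m \<subseteq> X \<and> total_deg m \<le> d}"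
  have "finite S"
    unfolding S_def using finite_total_deg_le[of d] by (auto intro: finite_subset)
  moreover have "S \<subseteq> Poly X"
    unfolding S_def by (auto intro: Poly_single)
  moreover have "p \<in> span_mod (ideal_gen X G) S" if "p \<in> Poly X" for p
  proof -
    obtain q where "q \<in> V.span S" "p - q \<in> perp X F"
      using exists_low_degree_part[OF F \<open>p \<in> Poly X\<close>] unfolding S_def by blast
    then have "q + (p - q) \<in> span_mod (ideal_gen X G) S"
      unfolding span_mod_def using G ideal_gen_base by blast
    then show ?thesis by simp
  qed
  ultimately show ?thesis
    by (auto simp: spans_mod_iff)
qed

section \<open>Forms in disjoint sets of variables\<close>

locale disjoint_forms =
  fixes X Y :: "'v::finite set" and F1 F2 l1 l2 :: "'v mpoly" and d :: nat
  assumes disjoint: "X \<inter> Y = {}" and cover: "X \<union> Y = UNIV" and two_le_d: "2 \<le> d"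
    and F1: "F1 \<in> Hom X d" and F2: "F2 \<in> Hom Y d"
    and l1: "l1 \<in> LinForms X" and l2: "l2 \<in> LinForms Y"
    and l1_F1: "act l1 F1 \<noteq> 0" and l2_F2: "act l2 F2 \<noteq> 0"
begin

sublocale swap: disjoint_forms Y X F2 F1 l2 l1 d
  using disjoint cover two_le_d F1 F2 l1 l2 l1_F1 l2_F2 by unfold_locales auto

abbreviation I :: "'v mpoly set" where
  "I \<equiv> ideal_gen UNIV (perp UNIV (F1 + F2) \<union> {l1 + l2})"

abbreviation I1 :: "'v mpoly set" where
  "I1 \<equiv> ideal_gen X (perp X F1 \<union> {l1})"

abbreviation I2 :: "'v mpoly set" where
  "I2 \<equiv> ideal_gen Y (perp Y F2 \<union> {l2})"

lemma I_swap: "ideal_gen UNIV (perp UNIV (F2 + F1) \<union> {l2 + l1}) = I"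
  by (simp add: add.commute)

lemma F1_Poly: "F1 \<in> Poly X"
  using F1 by (simp add: Hom_iff)

lemma l1_Poly: "l1 \<in> Poly X"
  using l1 by (simp add: LinForms_def Hom_iff)

lemma l1_in_I1: "l1 \<in> I1"
  by (simp add: ideal_gen_base)

lemma restrict_vars_l1: "restrict_vars Y l1 = 0"
  using restrict_vars_Hom_disjoint[of Y X l1 1] disjoint l1 by (auto simp: LinForms_def)

lemma act_l1_Poly_Y: "G \<in> Poly Y \<Longrightarrow> act l1 G = 0"
  by (metis act_restrict_vars restrict_vars_l1 act_zero_left)

lemma exists_inverse_l1:
  obtains h where "h \<in> Poly X" "act h F2 = 0" "act (h * l1) F1 = 1"
proof -
  obtain h where h: "h \<in> Poly X" "restrict_vars Y h = 0" "act (h * l1) F1 = 1"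
    using exists_inverse_linear_form[OF disjoint two_le_d F1 l1 l1_F1] by blast
  have "act h F2 = 0"
    using act_restrict_vars[of F2 Y h] h(2) F2 by (simp add: Hom_iff)
  with h show ?thesis using that by blast
qed

lemma restrict_vars_perp:
  assumes g: "act g (F1 + F2) = 0"
  shows "restrict_vars X g \<in> I1"
proof -
  obtain h where h: "h \<in> Poly X" "act (h * l1) F1 = 1"
    using exists_inverse_l1 by blast
  have "act g F1 = - act g F2"
    using g by (simp add: act_add_right eq_neg_iff_add_eq_0)
  then have "act g F1 \<in> Poly Y"
    using act_in_Poly[of F2 Y g] F2 by (simp add: Hom_iff Poly_uminus)
  then obtain c where c: "act g F1 = single 0 c"
    using Poly_disjoint_const[OF disjoint act_in_Poly[OF F1_Poly]] by blast
  define q where "q = restrict_vars X g - smul c (h * l1)"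
  have "act q F1 = 0"
    using h(2) c by (simp add: q_def act_diff_left act_smul_left act_restrict_vars[OF F1_Poly])
      (simp add: smul_def)
  moreover have "q \<in> Poly X"
    unfolding q_def by (intro Poly_diff restrict_vars_in_Poly Poly_smul Poly_mult h(1) l1_Poly)
  ultimately have "q \<in> I1"
    by (simp add: perp_def ideal_gen_base)
  moreover have "smul c h * l1 \<in> I1"
    by (intro ideal_gen_mult Poly_smul h(1) l1_in_I1)
  ultimately have "q + smul c h * l1 \<in> I1"
    by (rule ideal_gen_add)
  then show ?thesis
    by (simp add: q_def smul_def mult.assoc)
qed

lemma restrict_vars_I:
  assumes "p \<in> I"
  shows "restrict_vars X p \<in> I1"
proof -
  obtain A f where A: "A \<subseteq> perp UNIV (F1 + F2) \<union> {l1 + l2}" "p = (\<Sum>a\<in>A. f a * a)"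
    using assms by (auto simp: ideal_gen_iff)
  have "restrict_vars X a \<in> I1" if "a \<in> A" for a
  proof -
    have "restrict_vars X (l1 + l2) = l1"
      using restrict_vars_Hom_disjoint[OF disjoint, of l2 1] l2
      by (simp add: restrict_vars_add restrict_vars_Poly[OF l1_Poly] LinForms_def)
    then show ?thesis
      using A(1) that restrict_vars_perp l1_in_I1 by (auto simp: perp_def)
  qed
  then have "(\<Sum>a\<in>A. restrict_vars X (f a) * restrict_vars X a) \<in> I1"
    by (intro ideal_gen_sum ideal_gen_mult[OF restrict_vars_in_Poly])
  then show ?thesis
    by (simp add: A(2) restrict_vars_sum restrict_vars_mult)
qed

lemma I_subset: "I \<subseteq> ideal_gen UNIV (perp X F1 \<union> {l1} \<union> LinForms Y)"
proof
  fix p assume "p \<in> I"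
  let ?J = "ideal_gen UNIV (perp X F1 \<union> {l1} \<union> LinForms Y)"
  have "restrict_vars X p \<in> ?J"
    using restrict_vars_I[OF \<open>p \<in> I\<close>] ideal_gen_mono[of X UNIV] by blast
  moreover have "p - restrict_vars X p \<in> ?J"
    using diff_restrict_vars_in_ideal_gen[OF cover] ideal_gen_mono[of UNIV UNIV] by blast
  ultimately have "restrict_vars X p + (p - restrict_vars X p) \<in> ?J"
    by (rule ideal_gen_add)
  then show "p \<in> ?J" by simp
qed

lemma one_notin_I1: "1 \<notin> I1"
proof -
  have "lookup a 0 = 0" if "a \<in> perp X F1 \<union> {l1}" for a
  proof (cases "a = l1")
    case True
    then show ?thesis
      using l1 lookup_zero_Hom[of l1 X 1] by (simp add: LinForms_def)
  next
    case False
    then show ?thesis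
      using that F1 l1_F1 lookup_zero_if_act_eq_0 by (fastforce simp: perp_def)
  qed
  then show ?thesis
    using lookup_zero_ideal_gen[of "perp X F1 \<union> {l1}" 1 X] by auto
qed

lemma l1_notin_Poly_Y: "l1 \<notin> Poly Y"
proof
  assume "l1 \<in> Poly Y"
  then have "l1 = single 0 (lookup l1 0)"
    using Poly_disjoint_const[OF disjoint l1_Poly] by blast
  also have "\<dots> = 0"
    using l1 lookup_zero_Hom[of l1 X 1] by (simp add: LinForms_def)
  finally show False
    using l1_F1 by simp
qed

end

(* Re-entering the locale makes the swap instances of the lemmas above available. *)
context disjoint_forms
begin

lemma l1_notin_I: "l1 \<notin> I"
proof
  obtain h1 where h1: "h1 \<in> Poly X" "act h1 F2 = 0" "act (h1 * l1) F1 = 1"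
    using exists_inverse_l1 by blast
  obtain h2 where h2: "h2 \<in> Poly Y" "act h2 F1 = 0" "act (h2 * l2) F2 = 1"
    using swap.exists_inverse_l1 by blast
  define H where "H = act h1 F1 - act h2 F2"
  have H: "H = act (h1 - h2) (F1 + F2)"
    by (simp add: H_def act_diff_left act_add_right h1(2) h2(2))
  have "act l1 (act h2 F2) = 0" "act l2 (act h1 F1) = 0"
    using act_l1_Poly_Y swap.act_l1_Poly_Y act_in_Poly F1_Poly swap.F1_Poly by blast+
  moreover have "act l1 (act h1 F1) = 1" "act l2 (act h2 F2) = 1"
    using h1(3) h2(3) by (simp_all add: mult.commute flip: act_mult)
  ultimately have l1_H: "act l1 H = 1" and l_H: "act (l1 + l2) H = 0"
    by (simp_all add: H_def act_diff_right act_add_left)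
  have "act a H = 0" if a: "a \<in> perp UNIV (F1 + F2) \<union> {l1 + l2}" for a
  proof (cases "a = l1 + l2")
    case False
    then have "act a (F1 + F2) = 0"
      using a by (simp add: perp_def)
    then show ?thesis
      unfolding H by (metis act_mult mult.commute act_zero_right)
  qed (simp add: l_H)
  moreover assume "l1 \<in> I"
  ultimately have "act l1 H = 0"
    by (rule act_eq_0_if_ideal_gen)
  then show False
    using l1_H by simp
qed

lemma quot_bases_disjoint:
  assumes E1: "finite E1" "E1 \<subseteq> Poly X" "indep_mod I1 E1"
    and E2: "finite E2" "E2 \<subseteq> Poly Y" "indep_mod I2 E2" "1 \<in> E2"
  shows "l1 \<notin> E1 \<union> (E2 - {1})" "E1 \<inter> (E2 - {1}) = {}"
proof -
  show "l1 \<notin> E1 \<union> (E2 - {1})"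
    using notin_if_indep_mod[OF E1(3,1)] l1_in_I1 l1_notin_Poly_Y E2(2) by blast
  have "t = 1" if "t \<in> E1" "t \<in> E2" for t
    using const_eq_one_if_indep_mod[OF subspace_ideal_gen E2(3,1,4)] that
      Poly_disjoint_const[OF disjoint] E1(2) E2(2) by (metis subsetD)
  then show "E1 \<inter> (E2 - {1}) = {}" by blast
qed

text \<open>Gluing bases: if \<open>\<Sum> c\<^sub>e e \<in> I\<close>, restricting to the variables \<open>Y\<close> kills \<open>l1\<close> and turns the
  \<open>E1\<close>-part into a constant, so independence of \<open>E2\<close> forces the \<open>E2 - {1}\<close>-coefficients to
  vanish; restricting to \<open>X\<close> then does the same for \<open>E1\<close>, and \<open>l1 \<notin> I\<close> for \<open>l1\<close>.\<close>

lemma indep_mod_glued_bases: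
  assumes E1: "finite E1" "E1 \<subseteq> Poly X" "indep_mod I1 E1"
    and E2: "finite E2" "E2 \<subseteq> Poly Y" "indep_mod I2 E2" "1 \<in> E2"
  shows "indep_mod I (insert l1 (E1 \<union> (E2 - {1})))"
  unfolding indep_mod_def
proof (intro allI impI)
  fix c assume c: "(\<Sum>e\<in>insert l1 (E1 \<union> (E2 - {1})). smul (c e) e) \<in> I"
  define A1 where "A1 = (\<Sum>e\<in>E1. smul (c e) e)"
  define A2 where "A2 = (\<Sum>e\<in>E2 - {1}. smul (c e) e)"
  have sum: "(\<Sum>e\<in>insert l1 (E1 \<union> (E2 - {1})). smul (c e) e) = smul (c l1) l1 + (A1 + A2)"
    using E1(1) E2(1) quot_bases_disjoint[OF E1 E2]
    by (simp add: A1_def A2_def sum.union_disjoint)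
  have p: "smul (c l1) l1 + (A1 + A2) \<in> I"
    using c sum by simp
  have A1: "A1 \<in> Poly X" and A2: "A2 \<in> Poly Y"
    using E1(2) E2(2) by (auto simp: A1_def A2_def intro!: Poly_sum Poly_smul)
  have "restrict_vars Y (smul (c l1) l1 + (A1 + A2)) = single 0 (lookup A1 0) + A2"
    by (simp add: restrict_vars_add restrict_vars_smul restrict_vars_l1
        restrict_vars_Poly[OF A2] restrict_vars_Poly_disjoint[OF swap.disjoint A1])
  then have c2: "\<forall>e\<in>E2 - {1}. c e = 0"
    using swap.restrict_vars_I[unfolded I_swap, OF p] E2(1,3,4)
    by (intro indep_mod_coeffs_vanish_off_one[where k = "lookup A1 0"]) (simp_all add: A2_def)
  then have "A2 = 0"
    by (simp add: A2_def)
  then have "restrict_vars X (smul (c l1) l1 + (A1 + A2)) = smul (c l1) l1 + A1"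
    by (simp add: restrict_vars_add restrict_vars_smul restrict_vars_Poly[OF l1_Poly]
        restrict_vars_Poly[OF A1])
  then have "smul (c l1) l1 + A1 \<in> I1"
    using restrict_vars_I[OF p] by simp
  moreover have "smul (c l1) l1 \<in> I1"
    using V.subspace_scale[OF subspace_ideal_gen l1_in_I1] .
  ultimately have "A1 \<in> I1"
    using V.subspace_diff[OF subspace_ideal_gen] by fastforce
  then have c1: "\<forall>e\<in>E1. c e = 0"
    using E1(3) unfolding indep_mod_def A1_def by blast
  then have "smul (c l1) l1 \<in> I"
    using p \<open>A2 = 0\<close> by (simp add: A1_def)
  then have "c l1 = 0"
    using scale_eq_0_if_notin_subspace[OF subspace_ideal_gen _ l1_notin_I] by blast
  then show "\<forall>e\<in>insert l1 (E1 \<union> (E2 - {1})). c e = 0"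
    using c1 c2 by blast
qed

lemma quot_dim_sum_le: "quot_dim (Poly X) I1 + quot_dim (Poly Y) I2 \<le> quot_dim UNIV I"
proof -
  obtain E1 where E1: "spans_mod (Poly X) I1 E1" "indep_mod I1 E1" "quot_dim (Poly X) I1 = card E1"
    using spans_mod_exists[OF F1, of "perp X F1 \<union> {l1}"] one_notin_I1
    by (auto intro: exists_quot_basis[OF subspace_ideal_gen _ Poly_one])
  obtain E2 where E2: "spans_mod (Poly Y) I2 E2" "indep_mod I2 E2" "1 \<in> E2"
      "quot_dim (Poly Y) I2 = card E2"
    using spans_mod_exists[OF F2, of "perp Y F2 \<union> {l2}"] swap.one_notin_I1
    by (auto intro: exists_quot_basis[OF subspace_ideal_gen _ Poly_one])
  have fin: "finite E1" "finite E2" and sub: "E1 \<subseteq> Poly X" "E2 \<subseteq> Poly Y"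
    using E1(1) E2(1) by (auto simp: spans_mod_iff)
  note disj = quot_bases_disjoint[OF fin(1) sub(1) E1(2) fin(2) sub(2) E2(2,3)]
  have "card E2 > 0"
    using fin(2) E2(3) card_gt_0_iff by blast
  then have "card (insert l1 (E1 \<union> (E2 - {1}))) = card E1 + card E2"
    using fin disj E2(3) by (simp add: card_Un_disjoint card_Diff_singleton)
  moreover have "enat (card (insert l1 (E1 \<union> (E2 - {1})))) \<le> quot_dim UNIV I"
    using fin sub E1(2) E2(2,3)
    by (intro card_le_quot_dim subspace_ideal_gen indep_mod_glued_bases) auto
  ultimately show ?thesis
    using E1(3) E2(4) by simp
qed

end

theorem mainTheorem3:
  fixes F1 F2 l1 l2 :: "('a::finite + 'b::finite) mpoly" and d :: nat
  defines "X1 \<equiv> range Inl" and "X2 \<equiv> range Inr"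
  assumes "d \<ge> 2"
    and "F1 \<in> Hom X1 d" and "F2 \<in> Hom X2 d"
    and "l1 \<in> LinForms X1" and "l2 \<in> LinForms X2"
    and "l1 \<notin> perp X1 F1" and "l2 \<notin> perp X2 F2"
  shows "(ideal_gen UNIV (perp UNIV (F1 + F2) \<union> {l1 + l2})
           \<subset> ideal_gen UNIV (perp X1 F1 \<union> {l1} \<union> LinForms X2)
             \<inter> ideal_gen UNIV (perp X2 F2 \<union> {l2} \<union> LinForms X1))
         \<and> quot_dim UNIV (ideal_gen UNIV (perp UNIV (F1 + F2) \<union> {l1 + l2}))
           \<ge> quot_dim (Poly X1) (ideal_gen X1 (perp X1 F1 \<union> {l1}))
             + quot_dim (Poly X2) (ideal_gen X2 (perp X2 F2 \<union> {l2}))"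
proof -
  have "X1 \<inter> X2 = {}" "X1 \<union> X2 = UNIV"
    unfolding X1_def X2_def by (auto, metis UNIV_I obj_sumE range_eqI)
  then interpret disjoint_forms X1 X2 F1 F2 l1 l2 d
    using assms by unfold_locales (auto simp: perp_def LinForms_def Hom_iff)
  have "l1 \<in> ideal_gen UNIV (perp X1 F1 \<union> {l1} \<union> LinForms X2)
      \<inter> ideal_gen UNIV (perp X2 F2 \<union> {l2} \<union> LinForms X1)"
    using l1 by (auto intro: ideal_gen_base)
  then show ?thesis
    using I_subset swap.I_subset[unfolded I_swap] l1_notin_I quot_dim_sum_le by blast
qed

end
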